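(* Let $\mathcal A$ be a unital associative algebra over $\mathbb C$, $L\ge0$, and let $A,B,C\in\mathcal A$ satisfy $[A,B]=C$ and $[A,C]=\sum_{i=1}^{L+1}\alpha_iA^i+\delta B+\epsilon+\beta\{A,B\}$ for complex constants $\alpha_i,\beta,\delta,\epsilon$. Define numbers $x_{i,j},y_{i,j}$ for $j\ge1$, $0\le i\le j$, by $x_{0,1}=\beta$, $x_{1,1}=1$, $y_{0,1}=\delta$, $y_{1,1}=2\beta$ and, for $j\ge2$, $$x_{i,j}=x_{i-1,j-1}+\beta x_{i,j-1}+y_{i,j-1},\qquad y_{i,j}=\delta x_{i,j-1}+2\beta x_{i-1,j-1}+y_{i-1,j-1},$$ with the conventions $x_{-1,j}=y_{-1,j}=0$ and $x_{j+1,j}=y_{j+1,j}=0$ for all $j\ge1$. Then for all integers $m\ge\ell\ge1$, $$A^mCA^\ell+A^\ell CA^m=\sum_{i=0}^{\ell}x_{i,\ell}\{A^{m+i},C\}-\sum_{n=0}^{\ell}y_{n,\ell}[A^{m+n},B].$$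
   Context: $[X,Y]=XY-YX$, $\{X,Y\}=XY+YX$, $A^0=1$. *)

theory Defs
  imports Complex_Main
begin

definition complex_algebra :: "(complex \<Rightarrow> 'a::ring_1 \<Rightarrow> 'a) \<Rightarrow> bool" where
  "complex_algebra smul \<longleftrightarrow>
     (\<forall>a b x. smul (a + b) x = smul a x + smul b x) \<and>
     (\<forall>a x y. smul a (x + y) = smul a x + smul a y) \<and>
     (\<forall>a b x. smul (a * b) x = smul a (smul b x)) \<and>
     (\<forall>x. smul 1 x = x) \<and>
     (\<forall>a x y. smul a (x * y) = smul a x * y) \<and>
     (\<forall>a x y. smul a (x * y) = x * smul a y)"

definition comm :: "'a::ring \<Rightarrow> 'a \<Rightarrow> 'a" where
  "comm X Y = X * Y - Y * X"

definition acomm :: "'a::ring \<Rightarrow> 'a \<Rightarrow> 'a" where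
  "acomm X Y = X * Y + Y * X"

text \<open>The numbers x_{i,j} (xc beta delta i j) and y_{i,j} (yc beta delta i j),
  for j \<ge> 1, 0 \<le> i \<le> j; the value is 0 whenever i > j (convention
  x_{j+1,j} = y_{j+1,j} = 0), and x_{-1,j} = y_{-1,j} = 0 is encoded by the case i = 0.
  The values at j = 0 are unused.\<close>
fun xc :: "complex \<Rightarrow> complex \<Rightarrow> nat \<Rightarrow> nat \<Rightarrow> complex"
and yc :: "complex \<Rightarrow> complex \<Rightarrow> nat \<Rightarrow> nat \<Rightarrow> complex" where
  "xc \<beta> \<delta> i 0 = 0"
| "xc \<beta> \<delta> i (Suc 0) = (if i = 0 then \<beta> else if i = 1 then 1 else 0)"
| "xc \<beta> \<delta> i (Suc (Suc k)) =
     (if i > Suc (Suc k) then 0 else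
       (case i of 0 \<Rightarrow> 0 | Suc i' \<Rightarrow> xc \<beta> \<delta> i' (Suc k))
       + \<beta> * xc \<beta> \<delta> i (Suc k) + yc \<beta> \<delta> i (Suc k))"
| "yc \<beta> \<delta> i 0 = 0"
| "yc \<beta> \<delta> i (Suc 0) = (if i = 0 then \<delta> else if i = 1 then 2 * \<beta> else 0)"
| "yc \<beta> \<delta> i (Suc (Suc k)) =
     (if i > Suc (Suc k) then 0 else
       \<delta> * xc \<beta> \<delta> i (Suc k)
       + 2 * \<beta> * (case i of 0 \<Rightarrow> 0 | Suc i' \<Rightarrow> xc \<beta> \<delta> i' (Suc k))
       + (case i of 0 \<Rightarrow> 0 | Suc i' \<Rightarrow> yc \<beta> \<delta> i' (Suc k)))"

end

theory Submission
  imports Defs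
begin

text \<open>Write S_l(m) = A^m C A^l + A^l C A^m. Then {A, S_l(m)} = S_l(m+1) + S_(l+1)(m), so
  S_(l+1) arises from S_l by the operator F \<mapsto> {A, F(-)} - F(- + 1) on sequences. On
  a_k = {A^k, C} and b_k = [A^k, B] this operator yields, by the two commutation relations,
  a_(k+1) + \<beta> a_k - \<delta> b_k - 2\<beta> b_(k+1) and b_(k+1) - a_k respectively (the polynomial and
  constant parts of [A, C] commute with A^k and drop out). Hence an expansion
  S_l(m) = \<Sum> x_i a_(m+i) - \<Sum> y_i b_(m+i) propagates to S_(l+1) with coefficients transformed
  exactly by the recursion defining x_(i,j) and y_(i,j); the induction on l starts from
  S_0(m) = a_m.\<close>

lemma mult_power_left_commute:
  fixes A X :: "'a::monoid_mult"
  shows "A * (A ^ k * X) = A ^ k * (A * X)"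
  by (metis mult.assoc power_commutes)

lemma acomm_sandwich:
  fixes A C :: "'a::ring_1"
  shows "acomm A (A ^ m * C * A ^ l + A ^ l * C * A ^ m)
    = (A ^ Suc m * C * A ^ l + A ^ l * C * A ^ Suc m) + (A ^ m * C * A ^ Suc l + A ^ Suc l * C * A ^ m)"
  by (simp add: acomm_def algebra_simps power_commutes)

lemma acomm_comm_power:
  fixes A B :: "'a::ring_1"
  shows "acomm A (comm (A ^ k) B) = 2 * comm (A ^ Suc k) B - acomm (A ^ k) (comm A B)"
  by (simp add: comm_def acomm_def algebra_simps mult_2 power_commutes mult_power_left_commute)

lemma acomm_acomm_power:
  fixes A C :: "'a::ring_1"
  shows "acomm A (acomm (A ^ k) C) = 2 * acomm (A ^ Suc k) C - comm (A ^ k) (comm A C)"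
  by (simp add: comm_def acomm_def algebra_simps mult_2 power_commutes mult_power_left_commute)

lemma comm_power_acomm:
  fixes A B :: "'a::ring_1"
  shows "comm (A ^ k) (acomm A B) = acomm A (comm (A ^ k) B)"
  by (simp add: comm_def acomm_def algebra_simps power_commutes mult_power_left_commute)

lemma comm_add_right: "comm X (Y + Z) = comm X Y + comm X Z"
  by (simp add: comm_def algebra_simps)

lemma comm_sum_right: "comm X (sum f S) = (\<Sum>i\<in>S. comm X (f i))"
  by (simp add: comm_def sum_distrib_left sum_distrib_right sum_subtractf)

lemma (in module) sum_scale_shift:
  "(\<Sum>i=0..Suc l. scale (case i of 0 \<Rightarrow> 0 | Suc j \<Rightarrow> x j) (f i)) = (\<Sum>i=0..l. scale (x i) (f (Suc i)))"
  by (simp only: sum.atLeast0_atMost_Suc_shift) simp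

lemma (in module) sum_scale_atLeast0_atMost_Suc:
  "x (Suc l) = 0 \<Longrightarrow> (\<Sum>i=0..Suc l. scale (x i) (f i)) = (\<Sum>i=0..l. scale (x i) (f i))"
  by (simp add: sum.atLeast0_atMost_Suc)

lemma
  assumes "j < i"
  shows xc_eq_0: "xc \<beta> \<delta> i j = 0" and yc_eq_0: "yc \<beta> \<delta> i j = 0"
proof -
  consider "j = 0" | "j = Suc 0" | k where "j = Suc (Suc k)"
    by (metis not0_implies_Suc)
  then show "xc \<beta> \<delta> i j = 0" "yc \<beta> \<delta> i j = 0"
    using assms by (cases; simp)+
qed

text \<open>x_(i,0) = [i = 0] and y_(i,0) = 0 are the coefficients of S_0(m) = {A^m, C}; from them the
  recursion also produces the initial values x_(i,1), y_(i,1).\<close>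

definition xc_ext :: "complex \<Rightarrow> complex \<Rightarrow> nat \<Rightarrow> nat \<Rightarrow> complex" where
  "xc_ext \<beta> \<delta> i j = (if j = 0 then of_bool (i = 0) else xc \<beta> \<delta> i j)"

definition yc_ext :: "complex \<Rightarrow> complex \<Rightarrow> nat \<Rightarrow> nat \<Rightarrow> complex" where
  "yc_ext \<beta> \<delta> i j = (if j = 0 then 0 else yc \<beta> \<delta> i j)"

lemma xc_ext_eq_0: "j < i \<Longrightarrow> xc_ext \<beta> \<delta> i j = 0"
  by (simp add: xc_ext_def xc_eq_0)

lemma yc_ext_eq_0: "j < i \<Longrightarrow> yc_ext \<beta> \<delta> i j = 0"
  by (simp add: yc_ext_def yc_eq_0)

lemma xc_ext_Suc:
  "xc_ext \<beta> \<delta> i (Suc j) = (case i of 0 \<Rightarrow> 0 | Suc i' \<Rightarrow> xc_ext \<beta> \<delta> i' j)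
     + \<beta> * xc_ext \<beta> \<delta> i j + yc_ext \<beta> \<delta> i j"
proof (cases "Suc j < i")
  case True
  then show ?thesis by (simp add: xc_ext_eq_0 yc_ext_eq_0 split: nat.split)
next
  case False
  then show ?thesis by (cases j) (auto simp: xc_ext_def yc_ext_def split: nat.split)
qed

lemma yc_ext_Suc:
  "yc_ext \<beta> \<delta> i (Suc j) = \<delta> * xc_ext \<beta> \<delta> i j
     + (case i of 0 \<Rightarrow> 0 | Suc i' \<Rightarrow> 2 * \<beta> * xc_ext \<beta> \<delta> i' j + yc_ext \<beta> \<delta> i' j)"
proof (cases "Suc j < i")
  case True
  then show ?thesis by (simp add: xc_ext_eq_0 yc_ext_eq_0 split: nat.split)
next
  case False
  then show ?thesis by (cases j) (auto simp: xc_ext_def yc_ext_def split: nat.split)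
qed

locale commutation_relations =
  fixes smul :: "complex \<Rightarrow> 'a::ring_1 \<Rightarrow> 'a"
    and A B C :: 'a
    and L :: nat
    and \<alpha> :: "nat \<Rightarrow> complex"
    and \<beta> \<delta> \<epsilon> :: complex
  assumes alg: "complex_algebra smul"
    and comm_A_B: "comm A B = C"
    and comm_A_C: "comm A C = (\<Sum>i=1..L+1. smul (\<alpha> i) (A ^ i)) + smul \<delta> B + smul \<epsilon> 1
                          + smul \<beta> (acomm A B)"
begin

sublocale module smul
  using alg by unfold_locales (simp_all add: complex_algebra_def)

lemma mult_scale_left: "smul a X * Y = smul a (X * Y)"
  and mult_scale_right: "X * smul a Y = smul a (X * Y)"
  using alg unfolding complex_algebra_def by metis+

lemma comm_scale_right: "comm X (smul a Y) = smul a (comm X Y)"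
  by (simp add: comm_def mult_scale_left mult_scale_right scale_right_diff_distrib)

lemma comm_power_comm_A_C:
  "comm (A ^ k) (comm A C) = smul \<delta> (comm (A ^ k) B) + smul \<beta> (acomm A (comm (A ^ k) B))"
proof -
  have "comm (A ^ k) (A ^ i) = 0" "comm (A ^ k) 1 = 0" for i
    by (simp_all add: comm_def power_add[symmetric] add.commute)
  then show ?thesis
    by (simp add: comm_A_C comm_add_right comm_sum_right comm_scale_right comm_power_acomm
        del: power_Suc)
qed

lemma acomm_A_comm_power:
  "acomm A (comm (A ^ k) B) = 2 * comm (A ^ Suc k) B - acomm (A ^ k) C"
  using acomm_comm_power[of A k B] by (simp add: comm_A_B)

lemma scale_two: "smul (2 * a) X = 2 * smul a X"
  by (metis mult_2 scale_left_distrib)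

lemma acomm_A_acomm_power:
  "acomm A (acomm (A ^ k) C) = 2 * acomm (A ^ Suc k) C + smul \<beta> (acomm (A ^ k) C)
     - smul \<delta> (comm (A ^ k) B) - smul (2 * \<beta>) (comm (A ^ Suc k) B)"
  by (simp add: acomm_acomm_power comm_power_comm_A_C acomm_A_comm_power
      scale_right_diff_distrib scale_two mult_scale_right)

definition expansion :: "(nat \<Rightarrow> complex) \<Rightarrow> (nat \<Rightarrow> complex) \<Rightarrow> nat \<Rightarrow> nat \<Rightarrow> 'a" where
  "expansion x y l m = (\<Sum>i=0..l. smul (x i) (acomm (A ^ (m + i)) C))
     - (\<Sum>i=0..l. smul (y i) (comm (A ^ (m + i)) B))"

lemma acomm_expansion:
  "acomm A (expansion x y l m)
     = (\<Sum>i=0..l. smul (x i) (acomm A (acomm (A ^ (m + i)) C)))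
     - (\<Sum>i=0..l. smul (y i) (acomm A (comm (A ^ (m + i)) B)))"
  by (simp add: expansion_def acomm_def sum_distrib_left sum_distrib_right
      mult_scale_left mult_scale_right scale_sum_right sum.distrib algebra_simps)

lemma acomm_A_expansion:
  assumes "x (Suc l) = 0" and "y (Suc l) = 0"
    and x': "\<And>i. x' i = (case i of 0 \<Rightarrow> 0 | Suc i' \<Rightarrow> x i') + \<beta> * x i + y i"
    and y': "\<And>i. y' i = \<delta> * x i + (case i of 0 \<Rightarrow> 0 | Suc i' \<Rightarrow> 2 * \<beta> * x i' + y i')"
  shows "acomm A (expansion x y l m) = expansion x y l (Suc m) + expansion x' y' (Suc l) m"
proof -
  define a where "a k = acomm (A ^ (m + k)) C" for k
  define b where "b k = comm (A ^ (m + k)) B" for k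
  have x'_sum: "(\<Sum>i=0..Suc l. smul (x' i) (a i))
      = (\<Sum>i=0..l. smul (x i) (a (Suc i)) + smul (\<beta> * x i) (a i) + smul (y i) (a i))"
    by (simp only: x' scale_left_distrib sum.distrib sum_scale_shift)
      (simp add: sum_scale_atLeast0_atMost_Suc assms(1,2))
  have y'_sum: "(\<Sum>i=0..Suc l. smul (y' i) (b i))
      = (\<Sum>i=0..l. smul (\<delta> * x i) (b i) + smul (2 * \<beta> * x i + y i) (b (Suc i)))"
    by (simp only: y' scale_left_distrib sum.distrib sum_scale_shift)
      (simp add: sum_scale_atLeast0_atMost_Suc assms(1,2))
  have "acomm A (expansion x y l m)
      = (\<Sum>i=0..l. smul (x i) (2 * a (Suc i) + smul \<beta> (a i) - smul \<delta> (b i)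
                                  - smul (2 * \<beta>) (b (Suc i))))
        - (\<Sum>i=0..l. smul (y i) (2 * b (Suc i) - a i))"
    by (simp add: acomm_expansion a_def b_def acomm_A_acomm_power acomm_A_comm_power)
  also have "\<dots> = ((\<Sum>i=0..l. smul (x i) (a (Suc i))) - (\<Sum>i=0..l. smul (y i) (b (Suc i))))
      + ((\<Sum>i=0..l. smul (x i) (a (Suc i)) + smul (\<beta> * x i) (a i) + smul (y i) (a i))
         - (\<Sum>i=0..l. smul (\<delta> * x i) (b i) + smul (2 * \<beta> * x i + y i) (b (Suc i))))"
    unfolding sum_subtractf[symmetric] sum.distrib[symmetric]
    by (intro sum.cong refl)
      (simp add: mult_2[where 'a = 'a] algebra_simps)
  also have "\<dots> = expansion x y l (Suc m) + expansion x' y' (Suc l) m"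
  proof -
    have "expansion x y l (Suc m)
        = (\<Sum>i=0..l. smul (x i) (a (Suc i))) - (\<Sum>i=0..l. smul (y i) (b (Suc i)))"
      by (simp add: expansion_def a_def b_def)
    moreover have "expansion x' y' (Suc l) m
        = (\<Sum>i=0..Suc l. smul (x' i) (a i)) - (\<Sum>i=0..Suc l. smul (y' i) (b i))"
      by (simp only: expansion_def a_def b_def)
    ultimately show ?thesis
      by (simp only: x'_sum y'_sum)
  qed
  finally show ?thesis .
qed

lemma sandwich_eq_expansion:
  "A ^ m * C * A ^ l + A ^ l * C * A ^ m
     = expansion (\<lambda>i. xc_ext \<beta> \<delta> i l) (\<lambda>i. yc_ext \<beta> \<delta> i l) l m"
proof (induction l arbitrary: m)
  case 0
  show ?case
    by (simp add: expansion_def xc_ext_def yc_ext_def acomm_def)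
next
  case (Suc l)
  have "A ^ m * C * A ^ Suc l + A ^ Suc l * C * A ^ m
      = acomm A (A ^ m * C * A ^ l + A ^ l * C * A ^ m) - (A ^ Suc m * C * A ^ l + A ^ l * C * A ^ Suc m)"
    by (simp add: acomm_sandwich)
  also have "\<dots> = acomm A (expansion (\<lambda>i. xc_ext \<beta> \<delta> i l) (\<lambda>i. yc_ext \<beta> \<delta> i l) l m)
      - expansion (\<lambda>i. xc_ext \<beta> \<delta> i l) (\<lambda>i. yc_ext \<beta> \<delta> i l) l (Suc m)"
    by (simp only: Suc.IH)
  also have "\<dots> = expansion (\<lambda>i. xc_ext \<beta> \<delta> i (Suc l)) (\<lambda>i. yc_ext \<beta> \<delta> i (Suc l)) (Suc l) m"
    by (simp add: acomm_A_expansion xc_ext_eq_0 yc_ext_eq_0 xc_ext_Suc yc_ext_Suc)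
  finally show ?case .
qed

lemma sandwich_expansion:
  assumes "1 \<le> l"
  shows "A ^ m * C * A ^ l + A ^ l * C * A ^ m
     = (\<Sum>i=0..l. smul (xc \<beta> \<delta> i l) (acomm (A ^ (m + i)) C))
     - (\<Sum>i=0..l. smul (yc \<beta> \<delta> i l) (comm (A ^ (m + i)) B))"
  using sandwich_eq_expansion[of m l] assms by (simp add: expansion_def xc_ext_def yc_ext_def)

end

theorem lemma3:
  fixes smul :: "complex \<Rightarrow> 'a::ring_1 \<Rightarrow> 'a"
    and A B C :: 'a
    and L :: nat
    and \<alpha> :: "nat \<Rightarrow> complex"
    and \<beta> \<delta> \<epsilon> :: complex
  assumes alg: "complex_algebra smul"
    and hC: "comm A B = C"
    and hAC: "comm A C = (\<Sum>i=1..L+1. smul (\<alpha> i) (A ^ i)) + smul \<delta> B + smul \<epsilon> 1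
                          + smul \<beta> (acomm A B)"
  shows "\<forall>m l::nat. 1 \<le> l \<and> l \<le> m \<longrightarrow>
           A ^ m * C * A ^ l + A ^ l * C * A ^ m =
             (\<Sum>i=0..l. smul (xc \<beta> \<delta> i l) (acomm (A ^ (m + i)) C))
           - (\<Sum>n=0..l. smul (yc \<beta> \<delta> n l) (comm (A ^ (m + n)) B))"
  using commutation_relations.sandwich_expansion[OF commutation_relations.intro[OF alg hC hAC]]
  by simp

end
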